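(* Let $\mu$ be a Borel measure on $\mathbb R$ with $\mu(\mathbb R)=1$ and $\mu(\{0\})\neq1$. Then for every $\sigma\in(0,+\infty)$, \[0<\inf_{\lambda_->0}\frac{\int_{y\in\mathbb R}(e^{\lambda_-y}-1)\,d\mu(y)+\sigma}{\lambda_-}+\inf_{\lambda_+>0}\frac{\int_{y\in\mathbb R}(e^{-\lambda_+y}-1)\,d\mu(y)+\sigma}{\lambda_+}.\]
   Context: The integrals and infima take values in $(-\infty,+\infty]$. *)

theory Defs
  imports "HOL-Analysis.Analysis"
begin

text \<open>Extended-valued integral with values in (-infinity,+infinity] for functions whose negative
  part has finite integral: positive part minus negative part (both as nonnegative integrals).\<close>
definition ext_integral :: "'a measure \<Rightarrow> ('a \<Rightarrow> real) \<Rightarrow> ereal" where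
  "ext_integral M f =
     enn2ereal (\<integral>\<^sup>+ x. ennreal (f x) \<partial>M) - enn2ereal (\<integral>\<^sup>+ x. ennreal (- f x) \<partial>M)"

end

theory Submission
  imports Defs
begin

text \<open>If \<open>\<mu>\<close> is not the Dirac mass at \<open>0\<close>, it gives positive mass \<open>\<epsilon>\<close> to some set
  \<open>{y. d \<le> \<bar>y\<bar>}\<close> with \<open>d > 0\<close>. Since \<open>(e\<^sup>l\<^sup>y - 1)/l \<ge> max y (-1/l)\<close>, and similarly for
  \<open>(e\<^sup>-\<^sup>m\<^sup>y - 1)/m\<close>, the sum of the two quotients is pointwise nonnegative and at least
  \<open>d - 1/min l m\<close> on that set. Hence the sum of the two objective functions at \<open>l\<close> and \<open>m\<close> is
  at least \<open>\<epsilon> max 0 (d - 1/min l m) + \<sigma>/min l m\<close>, which is bounded below by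
  \<open>min \<epsilon> \<sigma> d/2\<close> uniformly in \<open>l, m\<close>: the first term is large for large \<open>min l m\<close>, the
  second one for small \<open>min l m\<close>.\<close>

lemma ereal_add_less_real_split:
  fixes A B :: ereal
  assumes "A + B < ereal c"
  obtains x y where "A < ereal x" "B < ereal y" "x + y = c"
proof (cases A B rule: ereal2_cases)
  case (real_real r q)
  then show ?thesis
    using assms that[of "r + (c - r - q) / 2" "q + (c - r - q) / 2"] by (auto simp: field_simps)
next
  case (real_MInf r)
  then show ?thesis using that[of "r + 1" "c - r - 1"] by auto
next
  case (MInf_real q)
  then show ?thesis using that[of "c - q - 1" "q + 1"] by auto
next
  case MInf_MInf
  then show ?thesis using that[of 0 c] by auto
qed (use assms in auto)

lemma ereal_le_INF_add_INF:
  fixes a b :: "'i \<Rightarrow> ereal" and c :: real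
  assumes "\<And>l m. l \<in> S \<Longrightarrow> m \<in> S \<Longrightarrow> ereal c \<le> a l + b m"
  shows "ereal c \<le> (INF l\<in>S. a l) + (INF m\<in>S. b m)"
proof (rule ccontr)
  assume "\<not> ?thesis"
  then obtain x y where "(INF l\<in>S. a l) < ereal x" "(INF m\<in>S. b m) < ereal y" "x + y = c"
    by (auto elim: ereal_add_less_real_split simp: not_le)
  then obtain l m where "l \<in> S" "a l < ereal x" "m \<in> S" "b m < ereal y"
    by (auto simp: INF_less_iff)
  then have "a l + b m < ereal c"
    using \<open>x + y = c\<close> ereal_add_strict_mono2 by fastforce
  with assms \<open>l \<in> S\<close> \<open>m \<in> S\<close> show False by (meson not_le)
qed

lemma (in finite_measure) ext_integral_bounded_below:
  assumes "f \<in> borel_measurable M" and "\<And>x. x \<in> space M \<Longrightarrow> B \<le> f x"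
  shows "ext_integral M f = (if integrable M f then ereal (integral\<^sup>L M f) else \<infinity>)"
proof -
  have "(\<integral>\<^sup>+ x. ennreal (- f x) \<partial>M) \<le> (\<integral>\<^sup>+ x. ennreal (- B) \<partial>M)"
    using assms(2) by (intro nn_integral_mono) (auto intro: ennreal_leI)
  also have "\<dots> < \<infinity>"
    by (simp add: emeasure_eq_measure ennreal_mult_less_top)
  finally obtain q where q: "(\<integral>\<^sup>+ x. ennreal (- f x) \<partial>M) = ennreal q" "0 \<le> q"
    by (cases "\<integral>\<^sup>+ x. ennreal (- f x) \<partial>M" rule: ennreal_cases) auto
  show ?thesis
  proof (cases "(\<integral>\<^sup>+ x. ennreal (f x) \<partial>M) = \<infinity>")
    case True
    then show ?thesis
      using q by (auto simp: ext_integral_def real_integrable_def)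
  next
    case False
    then obtain p where p: "(\<integral>\<^sup>+ x. ennreal (f x) \<partial>M) = ennreal p" "0 \<le> p"
      by (cases "\<integral>\<^sup>+ x. ennreal (f x) \<partial>M" rule: ennreal_cases) auto
    then have "integrable M f"
      using assms(1) q by (simp add: real_integrable_def)
    then show ?thesis
      using p q by (simp add: ext_integral_def real_lebesgue_integral_def enn2ereal_ennreal)
  qed
qed

lemma exists_abs_ge_not_null:
  fixes M :: "real measure"
  assumes "sets M = sets borel" and "emeasure M (UNIV - {0}) \<noteq> 0"
  obtains d where "d > 0" "emeasure M {y. d \<le> \<bar>y\<bar>} \<noteq> 0"
proof (rule ccontr)
  assume "\<not> thesis"
  then have "{y. 1 / Suc n \<le> \<bar>y\<bar>} \<in> null_sets M" for n
    using that[of "1 / Suc n"] assms(1) by (auto simp: null_sets_def)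
  then have "(\<Union>n. {y. 1 / Suc n \<le> \<bar>y\<bar>}) \<in> null_sets M"
    by (rule null_sets_UN)
  moreover have "UNIV - {0} \<subseteq> (\<Union>n. {y::real. 1 / Suc n \<le> \<bar>y\<bar>})"
  proof
    fix y :: real
    assume "y \<in> UNIV - {0}"
    then obtain n where "inverse (real (Suc n)) < \<bar>y\<bar>"
      using reals_Archimedean[of "\<bar>y\<bar>"] by auto
    then show "y \<in> (\<Union>n. {y. 1 / Suc n \<le> \<bar>y\<bar>})"
      by (intro UN_I[of n]) (auto simp: divide_inverse)
  qed
  moreover have "UNIV - {0} \<in> sets M"
    using assms(1) by simp
  ultimately show False
    using assms(2) null_sets_subset by blast
qed

lemma indicator_le_exp_quotient_sum:
  fixes l m d y :: real
  assumes "l > 0" "m > 0"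
  shows "indicator {y. d \<le> \<bar>y\<bar>} y * max 0 (d - 1 / min l m)
     \<le> (exp (l * y) - 1) / l + (exp (- m * y) - 1) / m"
proof -
  have lin: "y \<le> (exp (l * y) - 1) / l" "- y \<le> (exp (- m * y) - 1) / m"
    using exp_ge_add_one_self[of "l * y"] exp_ge_add_one_self[of "- m * y"] assms
    by (simp_all add: field_simps)
  have const: "- 1 / l \<le> (exp (l * y) - 1) / l" "- 1 / m \<le> (exp (- m * y) - 1) / m"
    using assms by (simp_all add: field_simps)
  have min: "1 / l \<le> 1 / min l m" "1 / m \<le> 1 / min l m"
    using assms by (auto simp: min_def divide_simps)
  show ?thesis
  proof (cases "d \<le> \<bar>y\<bar>")
    case True
    then have "d \<le> y \<or> d \<le> - y"
      by linarith
    then have "d - 1 / min l m \<le> (exp (l * y) - 1) / l + (exp (- m * y) - 1) / m"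
      using lin const min by linarith
    then show ?thesis
      using True lin by (simp add: indicator_def)
  next
    case False
    then show ?thesis
      using lin by (simp add: indicator_def)
  qed
qed

lemma min_mult_half_le:
  fixes \<epsilon> \<sigma> d s :: real
  assumes "\<epsilon> \<ge> 0" "\<sigma> > 0" "d > 0" "s > 0"
  shows "min \<epsilon> \<sigma> * d / 2 \<le> \<epsilon> * max 0 (d - 1 / s) + \<sigma> / s"
proof -
  have "min \<epsilon> \<sigma> * d / 2 \<le> \<epsilon> * (d / 2)" "min \<epsilon> \<sigma> * d / 2 \<le> \<sigma> * (d / 2)"
    using assms(3) by (simp_all add: mult_right_mono)
  moreover have "0 \<le> \<epsilon> * max 0 (d - 1 / s)" "0 \<le> \<sigma> / s"
    using assms by simp_all
  moreover have "\<sigma> * (d / 2) \<le> \<sigma> / s \<or> \<epsilon> * (d / 2) \<le> \<epsilon> * max 0 (d - 1 / s)"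
  proof (cases "d / 2 < 1 / s")
    case True
    then show ?thesis
      using mult_left_mono[of "d / 2" "1 / s" \<sigma>] assms(2) by simp
  next
    case False
    then have "d / 2 \<le> max 0 (d - 1 / s)"
      by linarith
    then show ?thesis
      using assms(1) by (intro disjI2 mult_left_mono)
  qed
  ultimately show ?thesis
    by linarith
qed

lemma integral_exp_quotients_lower_bound:
  fixes M :: "real measure"
  assumes "finite_measure M" "{y. d \<le> \<bar>y\<bar>} \<in> sets M"
    and "integrable M (\<lambda>y. exp (l * y) - 1)" "integrable M (\<lambda>y. exp (- m * y) - 1)"
    and "\<sigma> > 0" "d > 0" "l > 0" "m > 0"
  shows "min (measure M {y. d \<le> \<bar>y\<bar>}) \<sigma> * d / 2
    \<le> ((\<integral>y. exp (l * y) - 1 \<partial>M) + \<sigma>) / l + ((\<integral>y. exp (- m * y) - 1 \<partial>M) + \<sigma>) / m"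
proof -
  interpret finite_measure M by fact
  define \<epsilon> where "\<epsilon> = measure M {y. d \<le> \<bar>y\<bar>}"
  define F where "F = (\<integral>y. exp (l * y) - 1 \<partial>M)"
  define G where "G = (\<integral>y. exp (- m * y) - 1 \<partial>M)"
  have "\<epsilon> * max 0 (d - 1 / min l m) = (\<integral>y. indicator {y. d \<le> \<bar>y\<bar>} y * max 0 (d - 1 / min l m) \<partial>M)"
    using assms(2) unfolding \<epsilon>_def by simp
  also have "\<dots> \<le> (\<integral>y. (exp (l * y) - 1) / l + (exp (- m * y) - 1) / m \<partial>M)"
    using assms(2-4) indicator_le_exp_quotient_sum[OF \<open>l > 0\<close> \<open>m > 0\<close>]
    by (intro integral_mono) (auto intro!: integrable_real_mult_indicator simp: less_top[symmetric])
  also have "\<dots> = F / l + G / m"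
    using assms(3,4) unfolding F_def G_def by simp
  finally have "\<epsilon> * max 0 (d - 1 / min l m) \<le> F / l + G / m" .
  moreover have "min \<epsilon> \<sigma> * d / 2 \<le> \<epsilon> * max 0 (d - 1 / min l m) + \<sigma> / min l m"
    using assms unfolding \<epsilon>_def by (intro min_mult_half_le) auto
  moreover have "\<sigma> / min l m \<le> \<sigma> / l + \<sigma> / m"
    using assms by (auto simp: min_def)
  moreover have "(F + \<sigma>) / l + (G + \<sigma>) / m = F / l + G / m + (\<sigma> / l + \<sigma> / m)"
    by (simp add: add_divide_distrib)
  ultimately show ?thesis
    unfolding \<epsilon>_def F_def G_def by linarith
qed

lemma exp_quotients_lower_bound:
  fixes M :: "real measure"
  assumes "finite_measure M" "sets M = sets borel" and "\<sigma> > 0" "d > 0" "l > 0" "m > 0"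
  shows "ereal (min (measure M {y. d \<le> \<bar>y\<bar>}) \<sigma> * d / 2)
    \<le> (ext_integral M (\<lambda>y. exp (l * y) - 1) + ereal \<sigma>) / ereal l
      + (ext_integral M (\<lambda>y. exp (- m * y) - 1) + ereal \<sigma>) / ereal m"
proof -
  interpret finite_measure M by fact
  have ext: "ext_integral M (\<lambda>y. exp (c * y) - 1)
      = (if integrable M (\<lambda>y. exp (c * y) - 1) then ereal (\<integral>y. exp (c * y) - 1 \<partial>M) else \<infinity>)"
    for c :: real
  proof (rule ext_integral_bounded_below[where B = "-1"])
    show "(\<lambda>y. exp (c * y) - 1) \<in> borel_measurable M"
      unfolding measurable_cong_sets[OF assms(2) refl] by measurable
  qed simp
  show ?thesis
  proof (cases "integrable M (\<lambda>y. exp (l * y) - 1) \<and> integrable M (\<lambda>y. exp (- m * y) - 1)")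
    case True
    then show ?thesis
      using integral_exp_quotients_lower_bound[of M d l m \<sigma>] assms unfolding ext by simp
  next
    case False
    then have "ext_integral M (\<lambda>y. exp (l * y) - 1) = \<infinity> \<or> ext_integral M (\<lambda>y. exp (- m * y) - 1) = \<infinity>"
      unfolding ext by auto
    then show ?thesis
      using assms by auto
  qed
qed

theorem lemma11:
  fixes \<mu> :: "real measure" and \<sigma> :: real
  assumes "sets \<mu> = sets borel"
    and "emeasure \<mu> UNIV = 1"
    and "emeasure \<mu> {0} \<noteq> 1"
    and "\<sigma> > 0"
  shows "0 < (INF l\<in>{0<..}. (ext_integral \<mu> (\<lambda>y. exp (l * y) - 1) + ereal \<sigma>) / ereal l)
           + (INF l\<in>{0<..}. (ext_integral \<mu> (\<lambda>y. exp (- l * y) - 1) + ereal \<sigma>) / ereal l)"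
proof -
  have space: "space \<mu> = UNIV"
    using sets_eq_imp_space_eq[OF assms(1)] by simp
  interpret finite_measure \<mu>
    by (rule finite_measureI) (simp add: space assms(2))
  have "emeasure \<mu> UNIV = emeasure \<mu> {0} + emeasure \<mu> (UNIV - {0})"
    using assms(1) by (subst plus_emeasure) auto
  then have "emeasure \<mu> (UNIV - {0}) \<noteq> 0"
    using assms(2,3) by auto
  then obtain d where "d > 0" "emeasure \<mu> {y. d \<le> \<bar>y\<bar>} \<noteq> 0"
    using exists_abs_ge_not_null assms(1) by blast
  then have "0 < min (measure \<mu> {y. d \<le> \<bar>y\<bar>}) \<sigma> * d / 2"
    using assms(1,4) by (auto simp: emeasure_eq_measure zero_less_measure_iff)
  also have "ereal \<dots> \<le> (INF l\<in>{0<..}. (ext_integral \<mu> (\<lambda>y. exp (l * y) - 1) + ereal \<sigma>) / ereal l)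
           + (INF l\<in>{0<..}. (ext_integral \<mu> (\<lambda>y. exp (- l * y) - 1) + ereal \<sigma>) / ereal l)"
    using assms(1,4) \<open>d > 0\<close>
    by (intro ereal_le_INF_add_INF exp_quotients_lower_bound finite_measure_axioms) auto
  finally show ?thesis
    by (simp add: zero_ereal_def)
qed

end
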